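(* Let $G=E(1,1)$ be the group of real matrices $\begin{pmatrix} e^{-w}&0&u\\0&e^{w}&v\\0&0&1\end{pmatrix}$, $(u,v,w)\in\mathbb{R}^3$, with left-invariant vector fields $U=e^{-w}\partial_u$, $V=e^{w}\partial_v$, $W=\partial_w$, and $E_1=U-V$, $E_2=-W$, $E_3=\tfrac12(U+V)$. Let $g$ be the left-invariant Lorentzian metric for which $E_1,E_2,E_3$ is pseudo-orthonormal at every point with $g(E_1,E_1)=g(E_2,E_2)=1$, $g(E_3,E_3)=-1$, and let $\nabla$ be its Levi-Civita connection. Let $G$ act on itself by left translations and let $e$ be the identity. For $X\in T_eG$, let $X^*$ be the Killing vector field generated by the one-parameter subgroup $\exp(tX)$ acting by left translations (so $X^*_e=X$) and $\gamma_X(t)=\exp(tX)$ its integral curve through $e$. Then there is no nonzero light-like vector $X\in T_eG$ and constant $k\in\mathbb{R}$ with $\nabla_{X^*}X^*|_{\gamma_X(t)}=k\,X^*_{\gamma_X(t)}$ for all $t$; equivalently, the smooth tangent vector field on the circle of light-like directions $x=(\sin\varphi,\cos\varphi,1)$ given by $\tilde t_x=\big[2-\tfrac12\sin^2\varphi\big](\cos\varphi,-\sin\varphi)$ has no zero.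
   Context: Here the conclusion of the general theorem (existence of a light-like $X$ with $\nabla_{X^*}X^*=kX^*$ along $\gamma_X$) is shown to fail in dimension $3$. Along $\gamma_X$, the Killing field $X^*$ coincides with the left-invariant field $L^X$ with $L^X_e=X$. *)

theory Defs
  imports "HOL-Analysis.Analysis"
begin

text \<open>The group E(1,1) realised in global coordinates (u,v,w) on real^3:
  coordinate 1 = u, 2 = v, 3 = w.  The matrix
  [[exp(-w),0,u],[0,exp w,v],[0,0,1]] corresponds to (u,v,w).\<close>

type_synonym pt = "real ^ 3"

definition vec3 :: "real \<Rightarrow> real \<Rightarrow> real \<Rightarrow> real ^ 3" where
  "vec3 a b c = (\<chi> i. if i = 1 then a else if i = 2 then b else c)"

definition gmult :: "pt \<Rightarrow> pt \<Rightarrow> pt" where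
  "gmult p q = vec3 (p$1 + exp (- p$3) * q$1) (p$2 + exp (p$3) * q$2) (p$3 + q$3)"

definition gunit :: pt where "gunit = vec3 0 0 0"

definition fU :: "pt \<Rightarrow> real ^ 3" where "fU p = vec3 (exp (- p$3)) 0 0"
definition fV :: "pt \<Rightarrow> real ^ 3" where "fV p = vec3 0 (exp (p$3)) 0"
definition fW :: "pt \<Rightarrow> real ^ 3" where "fW p = vec3 0 0 1"

definition E1 :: "pt \<Rightarrow> real ^ 3" where "E1 p = fU p - fV p"
definition E2 :: "pt \<Rightarrow> real ^ 3" where "E2 p = - fW p"
definition E3 :: "pt \<Rightarrow> real ^ 3" where "E3 p = (1/2) *\<^sub>R (fU p + fV p)"

text \<open>Coefficients of a tangent vector a at p in the frame E1,E2,E3: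
  a = alpha E1 + beta E2 + gamma E3.\<close>
definition fa :: "pt \<Rightarrow> real ^ 3 \<Rightarrow> real" where
  "fa p a = (exp (p$3) * a$1 - exp (- p$3) * a$2) / 2"
definition fb :: "pt \<Rightarrow> real ^ 3 \<Rightarrow> real" where
  "fb p a = - a$3"
definition fc :: "pt \<Rightarrow> real ^ 3 \<Rightarrow> real" where
  "fc p a = exp (p$3) * a$1 + exp (- p$3) * a$2"

definition gmet :: "pt \<Rightarrow> real ^ 3 \<Rightarrow> real ^ 3 \<Rightarrow> real" where
  "gmet p a b = fa p a * fa p b + fb p a * fb p b - fc p a * fc p b"

definition gmat :: "pt \<Rightarrow> real ^ 3 ^ 3" where
  "gmat p = (\<chi> i j. gmet p (axis i 1) (axis j 1))"

definition ginv :: "pt \<Rightarrow> real ^ 3 ^ 3" where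
  "ginv p = matrix_inv (gmat p)"

definition pderiv3 :: "3 \<Rightarrow> (pt \<Rightarrow> real) \<Rightarrow> pt \<Rightarrow> real" where
  "pderiv3 i f p = frechet_derivative f (at p) (axis i 1)"

definition Gamma :: "pt \<Rightarrow> 3 \<Rightarrow> 3 \<Rightarrow> 3 \<Rightarrow> real" where
  "Gamma p k i j = (1/2) * (\<Sum>l\<in>UNIV. ginv p $ k $ l *
      (pderiv3 i (\<lambda>q. gmat q $ j $ l) p + pderiv3 j (\<lambda>q. gmat q $ i $ l) p
       - pderiv3 l (\<lambda>q. gmat q $ i $ j) p))"

definition nabla :: "(pt \<Rightarrow> real ^ 3) \<Rightarrow> (pt \<Rightarrow> real ^ 3) \<Rightarrow> pt \<Rightarrow> real ^ 3" where
  "nabla X Y p = frechet_derivative Y (at p) (X p)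
     + (\<chi> k. \<Sum>i\<in>UNIV. \<Sum>j\<in>UNIV. Gamma p k i j * X p $ i * Y p $ j)"

definition one_param_subgroup :: "(real \<Rightarrow> pt) \<Rightarrow> real ^ 3 \<Rightarrow> bool" where
  "one_param_subgroup gam X \<longleftrightarrow>
     (\<forall>s t. gam (s + t) = gmult (gam s) (gam t)) \<and> (gam has_vector_derivative X) (at 0)"

definition killing_field :: "(real \<Rightarrow> pt) \<Rightarrow> pt \<Rightarrow> real ^ 3" where
  "killing_field gam p = vector_derivative (\<lambda>s. gmult (gam s) p) (at 0)"

end

theory Submission
  imports Defs
begin

(* Write K for the Killing field of X.  The condition nabla_K K = k K along
   gamma_X is in particular required at t = 0, where gamma_X(0) = e and K_e = X.  So it
   suffices to compute (nabla_K K)(e) in the global coordinates (u,v,w) and to show that the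
   resulting algebraic system has no nonzero light-like solution.
   1. The metric coefficients depend on w only and are explicit exponentials in w; hence the
      only nonzero partial derivatives of g_ij are the w-derivatives, and g_ij(e), g^ij(e) are
      explicit constant matrices.  This gives the Christoffel symbols at e.
   2. A one-parameter subgroup starts at e, and its left-action Killing field is the affine
      field K_p = (X_1 - X_3 p_1, X_2 + X_3 p_2, X_3), whose derivative is a constant linear
      map.  Together with step 1 this gives (nabla_K K)(e) as a quadratic expression in X.
   3. The equation (nabla_K K)(e) = k X together with g(X,X) = 0 forces X = 0: the
      horizontal equations form a 2x2 linear system with determinant k^2 - c^2 (c = X_3), and
      in both eigenvalue cases k = c, k = -c the vertical equation contradicts the light-cone
      equation.
   The equivalent formulation via the tangent field on the circle of light-like directions is
   immediate, since 2 - sin^2/2 > 0 and (cos, -sin) never vanishes. *)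

lemma vec3_nth [simp]: "vec3 a b c $ 1 = a" "vec3 a b c $ 2 = b" "vec3 a b c $ 3 = c"
  by (simp_all add: vec3_def)

lemma vec3_eq_iff: "(x::real^3) = y \<longleftrightarrow> x$1 = y$1 \<and> x$2 = y$2 \<and> x$3 = y$3"
  by (simp add: vec_eq_iff forall_3)

lemma vec3_axes: "vec3 a b c = a *\<^sub>R axis 1 1 + b *\<^sub>R axis 2 1 + c *\<^sub>R axis 3 1"
  by (simp add: vec3_eq_iff axis_def)

lemma gmet_vertical:
  "gmet (vec3 0 0 t) a b = - 3/4 * exp (2*t) * (a$1*b$1) - 5/4 * (a$1*b$2 + a$2*b$1)
                          - 3/4 * exp (-2*t) * (a$2*b$2) + a$3*b$3"
proof -
  have "exp (2*t) = exp t * exp t" "exp (-2*t) = inverse (exp t * exp t)"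
    by (simp_all flip: exp_add exp_minus)
  then show ?thesis
    unfolding gmet_def fa_def fb_def fc_def vec3_nth exp_minus by (simp add: field_simps)
qed

lemma gmat_vertical: "gmat q $ i $ j = gmet (vec3 0 0 (q$3)) (axis i 1) (axis j 1)"
  unfolding gmat_def gmet_def fa_def fb_def fc_def by simp

lemma gmet_vertical_deriv:
  "((\<lambda>t. gmet (vec3 0 0 t) a b) has_real_derivative
      - 3/2 * exp (2*t) * (a$1*b$1) + 3/2 * exp (-2*t) * (a$2*b$2)) (at t)"
  unfolding gmet_vertical by (auto intro!: derivative_eq_intros simp: algebra_simps)

lemma pderiv3_vertical:
  assumes "(F has_real_derivative d) (at (p$3))"
  shows "pderiv3 i (\<lambda>q. F (q$3)) p = (if i = 3 then d else 0)"
proof -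
  have "((\<lambda>q::real^3. q$3) has_derivative (\<lambda>h. h$3)) (at p)"
    by (rule bounded_linear_imp_has_derivative[OF bounded_linear_vec_nth])
  from has_derivative_compose[OF this assms[unfolded has_field_derivative_def]]
  have "((\<lambda>q. F (q$3)) has_derivative (\<lambda>h. d * h$3)) (at p)"
    by (simp add: o_def mult.commute)
  from frechet_derivative_at[OF this, symmetric] show ?thesis
    unfolding pderiv3_def by (simp add: axis_def)
qed

lemma pderiv3_gmat_unit:
  "pderiv3 i (\<lambda>q. gmat q $ j $ l) gunit =
     (if i = 3 then - 3/2 * (axis j 1 $ 1 * axis l 1 $ 1) + 3/2 * (axis j 1 $ 2 * axis l 1 $ 2)
      else 0)"
  unfolding gmat_vertical
  using pderiv3_vertical[OF gmet_vertical_deriv[of "axis j 1" "axis l 1" "gunit$3"], of i]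
  by (simp add: gunit_def)

lemma gmat_unit:
  "gmat gunit = (\<chi> i j. if i = 3 \<and> j = 3 then 1 else if i = 3 \<or> j = 3 then 0
                         else if i = j then -3/4 else -5/4)"
  unfolding vec_eq_iff forall_3 gmat_vertical by (simp add: gunit_def gmet_vertical axis_def)

lemma matrix_inv_eqI:
  fixes A :: "'a::semiring_1^'n^'m" and B :: "'a^'m^'n"
  assumes "A ** B = mat 1" "B ** A = mat 1"
  shows "matrix_inv A = B"
proof -
  have "\<exists>A'. A ** A' = mat 1 \<and> A' ** A = mat 1" using assms by blast
  then have inv: "A ** matrix_inv A = mat 1 \<and> matrix_inv A ** A = mat 1"
    unfolding matrix_inv_def by (rule someI_ex)
  have "matrix_inv A = matrix_inv A ** (A ** B)" using assms by simp
  also have "\<dots> = B" using inv by (simp add: matrix_mul_assoc)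
  finally show ?thesis .
qed

definition ginv_unit :: "real^3^3" where
  "ginv_unit = (\<chi> i j. if i = 3 \<and> j = 3 then 1 else if i = 3 \<or> j = 3 then 0
                       else if i = j then 3/4 else -5/4)"

lemma ginv_at_unit: "ginv gunit = ginv_unit"
  unfolding ginv_def
  by (rule matrix_inv_eqI)
     (simp_all add: gmat_unit ginv_unit_def vec_eq_iff forall_3 matrix_matrix_mult_def sum_3 mat_def)

(* Covariant derivative at e of a field with value X and constant derivative
   h \<mapsto> (-c h_1, c h_2, 0), where c = X_3: the shape of every Killing field below. *)
lemma nabla_at_unit:
  assumes "\<And>h. frechet_derivative K (at gunit) h = vec3 (- c * h$1) (c * h$2) 0"
    and "K gunit = X" "X$3 = c"
  shows "nabla K K gunit =
           vec3 (- 17/8 * c * X$1 - 15/8 * c * X$2) (15/8 * c * X$1 + 17/8 * c * X$2)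
                (3/4 * (X$1^2 - X$2^2))"
  using assms(3)
  unfolding nabla_def assms(1,2) vec3_eq_iff Gamma_def ginv_at_unit pderiv3_gmat_unit
  by (simp add: sum_3 ginv_unit_def axis_def algebra_simps power2_eq_square)

lemma one_param_subgroup_at_0:
  assumes "one_param_subgroup gam X" shows "gam 0 = gunit"
proof -
  have idem: "gam 0 = gmult (gam 0) (gam 0)"
    using assms unfolding one_param_subgroup_def by (metis add_0)
  then have "gam 0 $ 3 = 0" by (simp add: vec3_eq_iff gmult_def)
  with idem show ?thesis by (simp add: vec3_eq_iff gmult_def gunit_def)
qed

lemma killing_field_formula:
  assumes "one_param_subgroup gam X"
  shows "killing_field gam p = vec3 (X$1 - X$3 * p$1) (X$2 + X$3 * p$2) (X$3)"
proof -
  have d: "(gam has_vector_derivative X) (at 0)"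
    using assms unfolding one_param_subgroup_def by blast
  have comp: "((\<lambda>s. gam s $ i) has_real_derivative X $ i) (at 0)" for i
    using bounded_linear.has_vector_derivative[OF bounded_linear_vec_nth d, of i]
    by (simp add: has_real_derivative_iff_has_vector_derivative)
  have "((\<lambda>s. gmult (gam s) p) has_vector_derivative
          vec3 (X$1 - X$3 * p$1) (X$2 + X$3 * p$2) (X$3)) (at 0)"
    unfolding gmult_def vec3_axes
    by (rule derivative_eq_intros comp refl)+
       (use one_param_subgroup_at_0[OF assms] in \<open>simp add: gunit_def algebra_simps\<close>)
  then show ?thesis unfolding killing_field_def by (rule vector_derivative_at)
qed

lemma killing_field_deriv:
  assumes "one_param_subgroup gam X"
  shows "frechet_derivative (killing_field gam) (at p) h = vec3 (- X$3 * h$1) (X$3 * h$2) 0"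
proof -
  define L where "L = (\<lambda>h::real^3. vec3 (- X$3 * h$1) (X$3 * h$2) 0)"
  have "linear L" unfolding L_def by (rule linearI) (simp_all add: vec3_eq_iff algebra_simps)
  then have "((\<lambda>q. L q + X) has_derivative L) (at p)"
    by (intro has_derivative_add_const bounded_linear_imp_has_derivative)
       (simp add: linear_conv_bounded_linear)
  moreover have "killing_field gam = (\<lambda>q. L q + X)"
    unfolding killing_field_formula[OF assms, abs_def] L_def by (simp add: fun_eq_iff vec3_eq_iff)
  ultimately have "(killing_field gam has_derivative L) (at p)" by simp
  from frechet_derivative_at[OF this, symmetric] show ?thesis unfolding L_def by simp
qed

lemma nabla_killing_at_unit:
  assumes "one_param_subgroup gam X"
  shows "nabla (killing_field gam) (killing_field gam) gunit =
           vec3 (- 17/8 * X$3 * X$1 - 15/8 * X$3 * X$2) (15/8 * X$3 * X$1 + 17/8 * X$3 * X$2)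
                (3/4 * (X$1^2 - X$2^2))"
  by (rule nabla_at_unit[OF killing_field_deriv[OF assms]])
     (simp_all add: killing_field_formula[OF assms] vec3_eq_iff gunit_def)

lemma horizontal_eigenvalues:
  fixes x y c k :: real
  assumes hx: "- 17/8 * c * x - 15/8 * c * y = k * x"
    and hy: "15/8 * c * x + 17/8 * c * y = k * y"
    and nz: "x \<noteq> 0 \<or> y \<noteq> 0"
  shows "k = c \<or> k = - c"
proof -
  have "(k^2 - c^2) * x = (17/8*c - k) * ((-17/8*c - k) * x - 15/8*c*y)
                          + 15/8*c * ((17/8*c - k) * y + 15/8*c*x)"
       "(k^2 - c^2) * y = (-17/8*c - k) * ((17/8*c - k) * y + 15/8*c*x)
                          - 15/8*c * ((-17/8*c - k) * x - 15/8*c*y)"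
    by (simp_all add: field_simps power2_eq_square)
  moreover have "(-17/8*c - k) * x - 15/8*c*y = 0" "(17/8*c - k) * y + 15/8*c*x = 0"
    using hx hy by (simp_all add: algebra_simps)
  ultimately have "(k^2 - c^2) * x = 0" "(k^2 - c^2) * y = 0" by simp_all
  then have "(k - c) * (k + c) = 0" using nz by (auto simp: algebra_simps power2_eq_square)
  then show ?thesis by auto
qed

lemma pregeodesic_system_light_like:
  fixes x y c k :: real
  assumes hx: "- 17/8 * c * x - 15/8 * c * y = k * x"
    and hy: "15/8 * c * x + 17/8 * c * y = k * y"
    and hw: "3/4 * (x^2 - y^2) = k * c"
    and light: "- 3/4 * x^2 - 5/2 * x * y - 3/4 * y^2 + c^2 = 0"
  shows "x = 0 \<and> y = 0 \<and> c = 0"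
proof (cases "c = 0")
  case True
  then have "(x - y) * (x + y) = 0" using hw by (simp add: algebra_simps power2_eq_square)
  then have "y = x \<or> y = - x" by auto
  then have "x^2 = 0" using light True by (auto simp: power2_eq_square algebra_simps)
  then show ?thesis using \<open>y = x \<or> y = - x\<close> True by auto
next
  case False
  have c2: "c^2 > 0" using False by simp
  show ?thesis
  proof (cases "x = 0 \<and> y = 0")
    case True
    then show ?thesis using light False by simp
  next
    case nz: False
    then have "k = c \<or> k = - c" using horizontal_eigenvalues[OF hx hy] by blast
    then show ?thesis
    proof
      assume kc: "k = c"
      then have "c * (25 * x + 15 * y) = 0" using hx by (simp add: algebra_simps)
      then have "y = - 5/3 * x" using False by simp
      then have "- 4/3 * x^2 = c^2" using hw kc by (simp add: algebra_simps power2_eq_square)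
      then have False using c2 zero_le_power2[of x] by linarith
      then show ?thesis ..
    next
      assume kc: "k = - c"
      then have "c * (9 * x + 15 * y) = 0" using hx by (simp add: algebra_simps)
      then have "y = - 3/5 * x" using False by simp
      then have "12/25 * x^2 = - (c^2)" using hw kc by (simp add: algebra_simps power2_eq_square)
      then have False using c2 zero_le_power2[of x] by linarith
      then show ?thesis ..
    qed
  qed
qed

lemma no_light_like_pregeodesic_at_unit:
  assumes op: "one_param_subgroup gam X" and light: "gmet gunit X X = 0"
    and pregeo: "nabla (killing_field gam) (killing_field gam) gunit = k *\<^sub>R X"
  shows "X = 0"
proof -
  have "X$1 = 0 \<and> X$2 = 0 \<and> X$3 = 0"
  proof (rule pregeodesic_system_light_like[where k = k])
    show "- 17/8 * X$3 * X$1 - 15/8 * X$3 * X$2 = k * X$1"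
      "15/8 * X$3 * X$1 + 17/8 * X$3 * X$2 = k * X$2"
      "3/4 * (X$1^2 - X$2^2) = k * X$3"
      using pregeo unfolding nabla_killing_at_unit[OF op] vec3_eq_iff by simp_all
    show "- 3/4 * (X$1)^2 - 5/2 * X$1 * X$2 - 3/4 * (X$2)^2 + (X$3)^2 = 0"
      using light unfolding gunit_def gmet_vertical by (simp add: power2_eq_square algebra_simps)
  qed
  then show ?thesis by (simp add: vec3_eq_iff)
qed

lemma light_like_tangent_field_nonzero:
  "(2 - (sin \<phi>)\<^sup>2 / 2) *\<^sub>R (cos \<phi>, - sin \<phi>) \<noteq> (0::real \<times> real)"
proof -
  have "(sin \<phi>)\<^sup>2 \<le> 1" by (simp add: abs_square_le_1)
  then have "2 - (sin \<phi>)\<^sup>2 / 2 \<noteq> 0" by linarith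
  moreover have "(cos \<phi>, - sin \<phi>) \<noteq> (0::real \<times> real)"
    using sin_cos_squared_add[of \<phi>] by (auto simp: zero_prod_def power2_eq_square)
  ultimately show ?thesis by (metis scaleR_eq_0_iff)
qed

theorem mainTheorem7:
  shows "\<not> (\<exists>X gam (k::real). X \<noteq> 0 \<and> gmet gunit X X = 0 \<and>
             one_param_subgroup gam X \<and>
             (\<forall>t. nabla (killing_field gam) (killing_field gam) (gam t)
                    = k *\<^sub>R killing_field gam (gam t)))
         \<and> (\<forall>\<phi>::real. (2 - (sin \<phi>)\<^sup>2 / 2) *\<^sub>R (cos \<phi>, - sin \<phi>) \<noteq> (0::real \<times> real))"
proof (rule conjI[OF notI allI[OF light_like_tangent_field_nonzero]])
  assume "\<exists>X gam (k::real). X \<noteq> 0 \<and> gmet gunit X X = 0 \<and> one_param_subgroup gam X \<and>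
            (\<forall>t. nabla (killing_field gam) (killing_field gam) (gam t)
                   = k *\<^sub>R killing_field gam (gam t))"
  then obtain X gam k where "X \<noteq> 0" "gmet gunit X X = 0" and op: "one_param_subgroup gam X"
    and "nabla (killing_field gam) (killing_field gam) (gam 0) = k *\<^sub>R killing_field gam (gam 0)"
    by blast
  moreover have "gam 0 = gunit" and "killing_field gam gunit = X"
    using op by (simp_all add: one_param_subgroup_at_0 killing_field_formula vec3_eq_iff gunit_def)
  ultimately show False using no_light_like_pregeodesic_at_unit by metis
qed

end
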